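(* Let $\alpha\in(0,1)$ be irrational and let $s_\alpha$ be a Sturmian word of angle $\alpha$. For every positive even integer $n$, let $I_n=\{\{-i\alpha\}\mid 1\le i\le n\}$. Then \[ \mathit{ASF}_{s_\alpha}(n)=\begin{cases}\#\{x\in I_n\mid x\le\{-n\alpha\}\} & \text{if } \lfloor n\alpha\rfloor \text{ is even},\\ \#\{x\in I_n\mid x\ge\{-n\alpha\}\} & \text{if } \lfloor n\alpha\rfloor \text{ is odd}.\end{cases} \]
   Context: Alphabet $\{a,b\}$; $\{x\}=x-\lfloor x\rfloor$. For irrational $\alpha\in(0,1)$ and $\rho\in[0,1)$, the Sturmian word $s_{\alpha,\rho}=c_0c_1\cdots$ has $c_m=b$ if $\{\rho+m\alpha\}\in[0,1-\alpha)$ and $c_m=a$ otherwise (or with intervals $(0,1-\alpha]$ and $(1-\alpha,1]$); all these words have the same set of factors and $s_\alpha$ denotes any of them. An abelian square is a word $v_1v_2$ with $v_1,v_2$ having the same numbers of $a$'s and of $b$'s. $\mathit{ASF}_w(n)$ is the number of distinct factors of $w$ of length $n$ that are abelian squares. *)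

theory Defs
  imports Complex_Main
begin

datatype letter = a | b

text \<open>Upper fractional part, with values in (0,1]: used for the second convention.\<close>
definition frac_up :: "real \<Rightarrow> real" where
  "frac_up x = x - of_int \<lceil>x\<rceil> + 1"

definition sturmian :: "bool \<Rightarrow> real \<Rightarrow> real \<Rightarrow> nat \<Rightarrow> letter" where
  "sturmian upper \<alpha> \<rho> m =
     (if upper then (if frac_up (\<rho> + real m * \<alpha>) \<le> 1 - \<alpha> then b else a)
      else (if frac (\<rho> + real m * \<alpha>) < 1 - \<alpha> then b else a))"

definition factors_of_length :: "(nat \<Rightarrow> 'x) \<Rightarrow> nat \<Rightarrow> 'x list set" where
  "factors_of_length w n = {map w [i..<i+n] | i. True}"

definition parikh_eq :: "letter list \<Rightarrow> letter list \<Rightarrow> bool" where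
  "parikh_eq u v \<longleftrightarrow> count_list u a = count_list v a \<and> count_list u b = count_list v b"

definition abelian_square :: "letter list \<Rightarrow> bool" where
  "abelian_square v \<longleftrightarrow> (\<exists>v1 v2. v = v1 @ v2 \<and> parikh_eq v1 v2)"

definition ASF :: "(nat \<Rightarrow> letter) \<Rightarrow> nat \<Rightarrow> nat" where
  "ASF w n = card {v \<in> factors_of_length w n. abelian_square v}"

definition I_set :: "nat \<Rightarrow> real \<Rightarrow> real set" where
  "I_set n \<alpha> = {frac (- (real i * \<alpha>)) | i. 1 \<le> i \<and> i \<le> n}"

end

theory Submission
  imports Defs "HOL-Analysis.Kronecker_Approximation_Theorem"
begin

(*
  A factor of length n of s_alpha starting at position i is the mechanical word read from the
  orbit point theta = {rho + i alpha}: its prefix of length k contains floor(theta + k alpha)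
  letters a.  As theta runs through [0,1) this word changes exactly when theta crosses one of
  the points {-j alpha}, 0 <= j <= n, and by density the orbit visits every gap between
  consecutive points; so the factors of length n are in bijection with these n + 1 points.
  For n = 2h the word is an abelian square iff floor(theta + n alpha) = 2 floor(theta + h alpha),
  which, according to the parity of floor(n alpha), means theta < {-n alpha} or theta >= {-n alpha}.
  Counting points on the right side of {-n alpha}, and trading the point 0 for {-n alpha} in the
  even case, gives the formula.
*)

lemma floor_add_unit_interval:
  fixes x \<theta> :: real
  assumes "0 \<le> \<theta>" "\<theta> < 1"
  shows "\<lfloor>x + \<theta>\<rfloor> = \<lfloor>x\<rfloor> + (if 1 - \<theta> \<le> frac x then 1 else 0)"
proof -
  have "frac \<theta> = \<theta>" "\<lfloor>\<theta>\<rfloor> = 0" using assms by (simp_all add: frac_eq floor_eq_iff)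
  then show ?thesis using floor_add[of x \<theta>] by auto
qed

lemma floor_add_noninteger:
  fixes x \<theta> :: real
  assumes "0 \<le> \<theta>" "\<theta> < 1" "x \<notin> \<int>"
  shows "\<lfloor>\<theta> + x\<rfloor> = \<lfloor>x\<rfloor> + (if frac (- x) \<le> \<theta> then 1 else 0)"
  using floor_add_unit_interval[OF assms(1,2), of x] assms(3) by (simp add: frac_neg add.commute)

lemma floor_frac_add: "\<lfloor>frac y + z\<rfloor> = \<lfloor>y + z\<rfloor> - \<lfloor>y\<rfloor>"
proof -
  have "y + z = (frac y + z) + of_int \<lfloor>y\<rfloor>" by (simp add: frac_def)
  then show ?thesis by (metis floor_add_int add_diff_cancel_right')
qed

lemma floor_add_double_eq_iff:
  fixes x \<theta> :: real
  assumes "0 \<le> \<theta>" "\<theta> < 1" "2 * x \<notin> \<int>"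
  shows "\<lfloor>\<theta> + 2 * x\<rfloor> = 2 * \<lfloor>\<theta> + x\<rfloor> \<longleftrightarrow>
    (if even \<lfloor>2 * x\<rfloor> then \<theta> < frac (- (2 * x)) else frac (- (2 * x)) \<le> \<theta>)"
proof -
  define f where "f = frac x"
  have x_decomp: "2 * x = 2 * of_int \<lfloor>x\<rfloor> + 2 * f" unfolding f_def frac_def by simp
  have "x \<notin> \<int>" using assms(3) by auto
  then have floor_x: "\<lfloor>\<theta> + x\<rfloor> = \<lfloor>x\<rfloor> + (if 1 - f \<le> \<theta> then 1 else 0)"
    using floor_add_noninteger[OF assms(1,2)] unfolding f_def by (simp add: frac_neg)
  have floor_2x:
    "\<lfloor>\<theta> + 2 * x\<rfloor> = \<lfloor>2 * x\<rfloor> + (if 1 - frac (2 * x) \<le> \<theta> then 1 else 0)"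
    using floor_add_noninteger[OF assms] assms(3) by (simp add: frac_neg)
  have "0 \<le> f" "f < 1" unfolding f_def by (simp_all add: frac_lt_1)
  moreover have "f \<noteq> 1/2"
  proof
    assume "f = 1/2"
    then have "2 * x = of_int (2 * \<lfloor>x\<rfloor> + 1)" using x_decomp by simp
    then show False using assms(3) by (metis Ints_of_int)
  qed
  ultimately consider "f < 1/2" | "1/2 < f" by linarith
  then show ?thesis
  proof cases
    case 1
    then have "\<lfloor>2 * x\<rfloor> = 2 * \<lfloor>x\<rfloor>"
      by (intro floor_unique) (use x_decomp \<open>0 \<le> f\<close> in auto)
    moreover from this have "frac (2 * x) = 2 * f" using x_decomp by (simp add: frac_def)
    ultimately show ?thesis
      using floor_x floor_2x 1 \<open>0 \<le> f\<close> \<open>f < 1\<close> assms(3) by (auto simp: frac_neg)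
  next
    case 2
    then have "\<lfloor>2 * x\<rfloor> = 2 * \<lfloor>x\<rfloor> + 1"
      by (intro floor_unique) (use x_decomp \<open>f < 1\<close> in auto)
    moreover from this have "frac (2 * x) = 2 * f - 1" using x_decomp by (simp add: frac_def)
    ultimately show ?thesis
      using floor_x floor_2x 2 \<open>0 \<le> f\<close> \<open>f < 1\<close> assms(3) by (auto simp: frac_neg)
  qed
qed

lemma ceiling_add_unit_interval:
  fixes x \<alpha> :: real
  assumes "0 \<le> \<alpha>" "\<alpha> \<le> 1"
  shows "\<lceil>x + \<alpha>\<rceil> = \<lceil>x\<rceil> + (if frac_up x \<le> 1 - \<alpha> then 0 else 1)"
proof -
  have "\<lceil>x\<rceil> \<le> \<lceil>x + \<alpha>\<rceil>" using assms by (intro ceiling_mono) simp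
  moreover have "x + \<alpha> \<le> of_int (\<lceil>x\<rceil> + 1)" using assms le_of_int_ceiling[of x] by linarith
  then have "\<lceil>x + \<alpha>\<rceil> \<le> \<lceil>x\<rceil> + 1" by (simp only: ceiling_le_iff)
  moreover have "\<lceil>x + \<alpha>\<rceil> \<le> \<lceil>x\<rceil> \<longleftrightarrow> frac_up x \<le> 1 - \<alpha>"
    unfolding frac_up_def ceiling_le_iff by linarith
  ultimately show ?thesis by auto
qed

lemma ceiling_eq_floor_diff_add_one:
  assumes "0 < e" "e < frac_up x"
  shows "\<lceil>x\<rceil> = \<lfloor>x - e\<rfloor> + 1"
proof -
  have "of_int (\<lceil>x\<rceil> - 1) \<le> x - e \<and> x - e < of_int (\<lceil>x\<rceil> - 1) + 1"
    using assms le_of_int_ceiling[of x] unfolding frac_up_def by linarith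
  then have "\<lfloor>x - e\<rfloor> = \<lceil>x\<rceil> - 1" by (simp only: floor_eq_iff)
  then show ?thesis by simp
qed

lemma frac_up_pos: "frac_up x > 0"
  using ceiling_correct[of x] unfolding frac_up_def by linarith

lemma frac_up_eq_frac:
  assumes "x \<notin> \<int>"
  shows "frac_up x = frac x"
proof -
  have "\<lceil>x\<rceil> = \<lfloor>x\<rfloor> + 1" using assms by (metis Ints_of_int ceiling_altdef)
  then show ?thesis unfolding frac_up_def frac_def by simp
qed

lemma of_nat_mult_irrational_notin_Ints:
  assumes "(\<alpha>::real) \<notin> \<rat>" "k > 0"
  shows "real k * \<alpha> \<notin> \<int>"
proof
  assume "real k * \<alpha> \<in> \<int>"
  then have "real k * \<alpha> / real k \<in> \<rat>" using Ints_subset_Rats Rats_divide Rats_of_nat by blast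
  then show False using assms by simp
qed

lemma frac_orbit_dense:
  fixes \<alpha> \<rho> lo hi :: real
  assumes "\<alpha> \<notin> \<rat>" "0 \<le> lo" "lo < hi" "hi \<le> 1"
  obtains m :: nat where "lo < frac (\<rho> + real m * \<alpha>)" "frac (\<rho> + real m * \<alpha>) < hi"
proof -
  define mid where "mid = (lo + hi) / 2"
  define c where "c = frac (mid - \<rho>)"
  have "0 \<le> c" "c \<le> 1" unfolding c_def using frac_lt_1[of "mid - \<rho>"] by auto
  then obtain m where "\<bar>frac (real m * \<alpha>) - c\<bar> < (hi - lo) / 2"
    using Kronecker_approx_1_explicit[OF assms(1)] assms(3) by (metis diff_gt_0_iff_gt half_gt_zero)
  then have "- ((hi - lo) / 2) < frac (real m * \<alpha>) - c \<and> frac (real m * \<alpha>) - c < (hi - lo) / 2"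
    by linarith
  moreover define z where "z = mid + (frac (real m * \<alpha>) - c)"
  ultimately have z: "lo < z" "z < hi" unfolding mid_def by (auto simp: field_simps)
  have "\<rho> + real m * \<alpha> - z = of_int (\<lfloor>real m * \<alpha>\<rfloor> - \<lfloor>mid - \<rho>\<rfloor>)"
    unfolding z_def c_def frac_def by simp
  then have "frac (\<rho> + real m * \<alpha>) = z" using z assms by (subst frac_unique_iff) auto
  then show ?thesis using z that by metis
qed

lemma length_eq_count_a_add_count_b: "length w = count_list w a + count_list w b"
proof (induction w)
  case (Cons x w)
  then show ?case by (cases x) auto
qed simp

lemma parikh_eq_length_eq: "parikh_eq u v \<Longrightarrow> length u = length v"
  unfolding parikh_eq_def by (metis length_eq_count_a_add_count_b)

lemma abelian_square_iff_count_halves: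
  assumes "length w = 2 * h"
  shows "abelian_square w \<longleftrightarrow> count_list (take h w) a = count_list (drop h w) a"
proof
  assume "abelian_square w"
  then obtain u v where "w = u @ v" "parikh_eq u v" unfolding abelian_square_def by blast
  moreover from this have "length u = h" using assms parikh_eq_length_eq by fastforce
  ultimately show "count_list (take h w) a = count_list (drop h w) a"
    unfolding parikh_eq_def by simp
next
  assume "count_list (take h w) a = count_list (drop h w) a"
  moreover have "length (take h w) = length (drop h w)" using assms by simp
  ultimately have "parikh_eq (take h w) (drop h w)"
    unfolding parikh_eq_def by (metis length_eq_count_a_add_count_b add_left_cancel)
  then show "abelian_square w" unfolding abelian_square_def by (metis append_take_drop_id)
qed

lemma map_upt_add: "map f [i..<i + n] = map (\<lambda>k. f (i + k)) [0..<n]"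
  by (induction n) auto

locale irrational_rotation =
  fixes \<alpha> :: real
  assumes angle_pos: "0 < \<alpha>" and angle_less_one: "\<alpha> < 1" and angle_irrational: "\<alpha> \<notin> \<rat>"
begin

definition mech_floor :: "real \<Rightarrow> nat \<Rightarrow> int" where
  "mech_floor \<theta> k = \<lfloor>\<theta> + real k * \<alpha>\<rfloor>"

definition mech_letter :: "real \<Rightarrow> nat \<Rightarrow> letter" where
  "mech_letter \<theta> k = (if mech_floor \<theta> (Suc k) = mech_floor \<theta> k + 1 then a else b)"

definition mech_word :: "nat \<Rightarrow> real \<Rightarrow> letter list" where
  "mech_word n \<theta> = map (mech_letter \<theta>) [0..<n]"

definition breakpoints :: "nat \<Rightarrow> real set" where
  "breakpoints n = (\<lambda>j. frac (- (real j * \<alpha>))) ` {..n}"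

lemma mech_floor_0: "\<theta> \<in> {0..<1} \<Longrightarrow> mech_floor \<theta> 0 = 0"
  unfolding mech_floor_def by (simp add: floor_eq_iff)

lemma mech_floor_Suc:
  "mech_floor \<theta> (Suc k) =
    mech_floor \<theta> k + (if 1 - \<alpha> \<le> frac (\<theta> + real k * \<alpha>) then 1 else 0)"
  using floor_add_unit_interval[of \<alpha> "\<theta> + real k * \<alpha>"] angle_pos angle_less_one
  unfolding mech_floor_def by (simp add: algebra_simps)

lemma mech_letter_eq: "mech_letter \<theta> k = (if 1 - \<alpha> \<le> frac (\<theta> + real k * \<alpha>) then a else b)"
  unfolding mech_letter_def mech_floor_Suc by simp

lemma mech_floor_pos:
  assumes "\<theta> \<in> {0..<1}" "k > 0"
  shows "mech_floor \<theta> k =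
    \<lfloor>real k * \<alpha>\<rfloor> + (if frac (- (real k * \<alpha>)) \<le> \<theta> then 1 else 0)"
  using floor_add_noninteger of_nat_mult_irrational_notin_Ints[OF angle_irrational] assms
  unfolding mech_floor_def by simp

lemma length_mech_word [simp]: "length (mech_word n \<theta>) = n"
  unfolding mech_word_def by simp

lemma take_mech_word: "k \<le> n \<Longrightarrow> take k (mech_word n \<theta>) = mech_word k \<theta>"
  unfolding mech_word_def by (simp add: take_map)

lemma count_a_mech_word:
  assumes "\<theta> \<in> {0..<1}"
  shows "int (count_list (mech_word k \<theta>) a) = mech_floor \<theta> k"
proof (induction k)
  case 0
  then show ?case using mech_floor_0[OF assms] by (simp add: mech_word_def)
next
  case (Suc k)
  then show ?case by (simp add: mech_word_def mech_letter_eq mech_floor_Suc)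
qed

lemma mech_word_eq_iff_mech_floor_eq:
  assumes "\<theta> \<in> {0..<1}" "\<theta>' \<in> {0..<1}"
  shows "mech_word n \<theta> = mech_word n \<theta>' \<longleftrightarrow>
    (\<forall>k\<le>n. mech_floor \<theta> k = mech_floor \<theta>' k)"
proof
  assume "mech_word n \<theta> = mech_word n \<theta>'"
  then have "mech_word k \<theta> = mech_word k \<theta>'" if "k \<le> n" for k
    using take_mech_word[OF that] by metis
  then show "\<forall>k\<le>n. mech_floor \<theta> k = mech_floor \<theta>' k"
    using count_a_mech_word assms by metis
next
  assume "\<forall>k\<le>n. mech_floor \<theta> k = mech_floor \<theta>' k"
  then show "mech_word n \<theta> = mech_word n \<theta>'"
    unfolding mech_word_def mech_letter_def by (intro map_cong) auto
qed

lemma mech_floor_eq_iff_breakpoints: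
  assumes "\<theta> \<in> {0..<1}" "\<theta>' \<in> {0..<1}"
  shows "(\<forall>k\<le>n. mech_floor \<theta> k = mech_floor \<theta>' k) \<longleftrightarrow>
    (\<forall>p\<in>breakpoints n. p \<le> \<theta> \<longleftrightarrow> p \<le> \<theta>')"
proof -
  have "mech_floor \<theta> k = mech_floor \<theta>' k \<longleftrightarrow>
      (frac (- (real k * \<alpha>)) \<le> \<theta> \<longleftrightarrow> frac (- (real k * \<alpha>)) \<le> \<theta>')" for k
  proof (cases "k = 0")
    case True
    then show ?thesis using assms mech_floor_0 by simp
  next
    case False
    then show ?thesis using assms mech_floor_pos by simp
  qed
  then show ?thesis unfolding breakpoints_def by auto
qed

lemma mech_word_eq_iff:
  "\<theta> \<in> {0..<1} \<Longrightarrow> \<theta>' \<in> {0..<1} \<Longrightarrow>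
    mech_word n \<theta> = mech_word n \<theta>' \<longleftrightarrow>
    (\<forall>p\<in>breakpoints n. p \<le> \<theta> \<longleftrightarrow> p \<le> \<theta>')"
  using mech_word_eq_iff_mech_floor_eq mech_floor_eq_iff_breakpoints by blast

lemma finite_breakpoints: "finite (breakpoints n)"
  unfolding breakpoints_def by simp

lemma breakpoints_subset: "breakpoints n \<subseteq> {0..<1}"
  unfolding breakpoints_def by (auto simp: frac_lt_1)

lemma zero_in_breakpoints: "0 \<in> breakpoints n"
  unfolding breakpoints_def by force

lemma breakpoint_gap:
  assumes "\<theta> \<in> {0..<1}"
  obtains lo hi where "lo \<in> breakpoints n" "lo \<le> \<theta>" "\<theta> < hi" "hi \<le> 1"
    "breakpoints n \<inter> {lo<..<hi} = {}"
proof -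
  define lo where "lo = Max {p \<in> breakpoints n. p \<le> \<theta>}"
  define hi where "hi = Min (insert 1 {p \<in> breakpoints n. \<theta> < p})"
  have below: "finite {p \<in> breakpoints n. p \<le> \<theta>}" "{p \<in> breakpoints n. p \<le> \<theta>} \<noteq> {}"
    using finite_breakpoints zero_in_breakpoints assms by auto
  then have "lo \<in> {p \<in> breakpoints n. p \<le> \<theta>}" unfolding lo_def by (rule Max_in)
  moreover have "\<forall>p\<in>breakpoints n. p \<le> \<theta> \<longrightarrow> p \<le> lo"
    unfolding lo_def using below(1) by simp
  ultimately have lo:
    "lo \<in> breakpoints n" "lo \<le> \<theta>" "\<forall>p\<in>breakpoints n. p \<le> \<theta> \<longrightarrow> p \<le> lo"
    by auto
  have "finite (insert 1 {p \<in> breakpoints n. \<theta> < p})" using finite_breakpoints by simp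
  then have hi: "\<theta> < hi" "hi \<le> 1" "\<forall>p\<in>breakpoints n. \<theta> < p \<longrightarrow> hi \<le> p"
    unfolding hi_def using assms by auto
  have "\<not> (lo < p \<and> p < hi)" if "p \<in> breakpoints n" for p
    using that lo(3) hi(3) by (cases "p \<le> \<theta>") auto
  then have "breakpoints n \<inter> {lo<..<hi} = {}" by auto
  then show ?thesis using that lo(1,2) hi(1,2) by simp
qed

lemma mech_word_eq_in_gap:
  assumes "lo \<in> breakpoints n" "hi \<le> 1" "breakpoints n \<inter> {lo<..<hi} = {}"
    and "\<theta> \<in> {lo..<hi}" "\<theta>' \<in> {lo..<hi}"
  shows "mech_word n \<theta> = mech_word n \<theta>'"
proof -
  have "0 \<le> lo" using assms(1) breakpoints_subset[of n] by auto
  then have "\<theta> \<in> {0..<1}" "\<theta>' \<in> {0..<1}" using assms(2,4,5) by auto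
  moreover have "p \<le> \<theta> \<longleftrightarrow> p \<le> \<theta>'" if "p \<in> breakpoints n" for p
  proof -
    have "p \<notin> {lo<..<hi}" using that assms(3) by blast
    then have "p \<le> lo \<or> hi \<le> p" by auto
    then show ?thesis using assms(4,5) by auto
  qed
  ultimately show ?thesis using mech_word_eq_iff by blast
qed

lemma factor_sturmian_lower:
  "map (sturmian False \<alpha> \<rho>) [i..<i + n] = mech_word n (frac (\<rho> + real i * \<alpha>))"
  unfolding map_upt_add mech_word_def
  by (intro map_cong) (auto simp: sturmian_def mech_letter_eq algebra_simps)

lemma factor_sturmian_upper:
  obtains \<theta> where "\<theta> \<in> {0..<1}" "map (sturmian True \<alpha> \<rho>) [i..<i + n] = mech_word n \<theta>"
proof -
  define y where "y = \<rho> + real i * \<alpha>"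
  define E where "E = (\<lambda>k. frac_up (y + real k * \<alpha>)) ` {..n}"
  define e where "e = Min E / 2"
  have "finite E" "E \<noteq> {}" unfolding E_def by auto
  then have "0 < Min E" using frac_up_pos unfolding E_def by auto
  moreover have "Min E \<le> frac_up (y + real k * \<alpha>)" if "k \<le> n" for k
    using \<open>finite E\<close> that unfolding E_def by simp
  ultimately have e: "0 < e" "\<forall>k\<le>n. e < frac_up (y + real k * \<alpha>)"
    unfolding e_def by force+
  define \<theta> where "\<theta> = frac (y - e)"
  \<comment> \<open>Shifting the start slightly to the left turns the ceilings of the upper word into floors.\<close>
  have floor_ceiling: "mech_floor \<theta> k = \<lceil>y + real k * \<alpha>\<rceil> - 1 - \<lfloor>y - e\<rfloor>"
    if "k \<le> n" for k
    using ceiling_eq_floor_diff_add_one[of e "y + real k * \<alpha>"] e that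
    unfolding mech_floor_def \<theta>_def floor_frac_add by (simp add: algebra_simps)
  have "mech_letter \<theta> k = sturmian True \<alpha> \<rho> (i + k)" if "k < n" for k
  proof -
    have "y + real (Suc k) * \<alpha> = (y + real k * \<alpha>) + \<alpha>" by (simp add: algebra_simps)
    then have "mech_floor \<theta> (Suc k) = mech_floor \<theta> k +
        (if frac_up (y + real k * \<alpha>) \<le> 1 - \<alpha> then 0 else 1)"
      using floor_ceiling[of k] floor_ceiling[of "Suc k"] that angle_pos angle_less_one
        ceiling_add_unit_interval[of \<alpha> "y + real k * \<alpha>"] by (simp add: add.assoc)
    then show ?thesis unfolding mech_letter_def sturmian_def y_def by (simp add: algebra_simps)
  qed
  then have "map (sturmian True \<alpha> \<rho>) [i..<i + n] = mech_word n \<theta>"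
    unfolding map_upt_add mech_word_def by (intro map_cong) auto
  moreover have "\<theta> \<in> {0..<1}" unfolding \<theta>_def by (simp add: frac_lt_1)
  ultimately show ?thesis using that by blast
qed

lemma factor_sturmian_upper_eq_lower:
  assumes "frac (\<rho> + real i * \<alpha>) \<notin> breakpoints n"
  shows "map (sturmian True \<alpha> \<rho>) [i..<i + n] = map (sturmian False \<alpha> \<rho>) [i..<i + n]"
proof -
  define y where "y = \<rho> + real i * \<alpha>"
  have not_int: "y + real j * \<alpha> \<notin> \<int>" if "j \<le> n" for j
  proof
    assume "y + real j * \<alpha> \<in> \<int>"
    then have "frac (- (real j * \<alpha>)) = frac ((y + real j * \<alpha>) + - (real j * \<alpha>))"
      by (simp only: frac_add_int_left)
    then have "frac y = frac (- (real j * \<alpha>))" by simp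
    then have "frac y \<in> breakpoints n" using that unfolding breakpoints_def by auto
    then show False using assms unfolding y_def by simp
  qed
  have "sturmian True \<alpha> \<rho> (i + k) = sturmian False \<alpha> \<rho> (i + k)" if "k < n" for k
  proof -
    define x where "x = y + real k * \<alpha>"
    have "x + \<alpha> \<notin> \<int>" using not_int[of "Suc k"] that unfolding x_def by (simp add: algebra_simps)
    have "frac x \<noteq> 1 - \<alpha>"
    proof
      assume "frac x = 1 - \<alpha>"
      then have "x + \<alpha> = of_int (\<lfloor>x\<rfloor> + 1)" unfolding frac_def by simp
      then show False using \<open>x + \<alpha> \<notin> \<int>\<close> by (metis Ints_of_int)
    qed
    moreover have "frac_up x = frac x" using not_int[of k] that unfolding x_def by (simp add: frac_up_eq_frac)
    moreover have "\<rho> + real (i + k) * \<alpha> = x" unfolding x_def y_def by (simp add: algebra_simps)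
    ultimately show ?thesis unfolding sturmian_def by auto
  qed
  then show ?thesis unfolding map_upt_add by (intro map_cong) auto
qed

lemma factors_sturmian:
  "factors_of_length (sturmian upper \<alpha> \<rho>) n = mech_word n ` breakpoints n"
proof (intro equalityI subsetI)
  fix v assume "v \<in> factors_of_length (sturmian upper \<alpha> \<rho>) n"
  then obtain i where v: "v = map (sturmian upper \<alpha> \<rho>) [i..<i + n]"
    unfolding factors_of_length_def by auto
  obtain \<theta> where \<theta>: "\<theta> \<in> {0..<1}" "v = mech_word n \<theta>"
  proof (cases upper)
    case True
    then show ?thesis using that factor_sturmian_upper v by metis
  next
    case False
    then show ?thesis using that[of "frac (\<rho> + real i * \<alpha>)"] factor_sturmian_lower v
      by (simp add: frac_lt_1)
  qed
  obtain lo hi where gap: "lo \<in> breakpoints n" "lo \<le> \<theta>" "\<theta> < hi" "hi \<le> 1"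
    "breakpoints n \<inter> {lo<..<hi} = {}"
    using breakpoint_gap[OF \<theta>(1)] by metis
  then have "mech_word n \<theta> = mech_word n lo" by (intro mech_word_eq_in_gap) auto
  then show "v \<in> mech_word n ` breakpoints n" using gap(1) \<theta>(2) by simp
next
  fix v assume "v \<in> mech_word n ` breakpoints n"
  then obtain p where p: "p \<in> breakpoints n" "v = mech_word n p" by auto
  have "p \<in> {0..<1}" using p(1) breakpoints_subset by blast
  then obtain lo hi where gap: "lo \<in> breakpoints n" "lo \<le> p" "p < hi" "hi \<le> 1"
    "breakpoints n \<inter> {lo<..<hi} = {}"
    by (rule breakpoint_gap)
  have "0 \<le> lo" using gap(1) breakpoints_subset[of n] by auto
  moreover have "lo < hi" using gap(2,3) by linarith
  \<comment> \<open>By density the orbit enters the open gap, where both conventions agree.\<close>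
  ultimately obtain m where m: "lo < frac (\<rho> + real m * \<alpha>)" "frac (\<rho> + real m * \<alpha>) < hi"
    using frac_orbit_dense[OF angle_irrational _ _ gap(4)] by blast
  then have "frac (\<rho> + real m * \<alpha>) \<notin> breakpoints n" using gap(5) by auto
  then have "map (sturmian upper \<alpha> \<rho>) [m..<m + n] = map (sturmian False \<alpha> \<rho>) [m..<m + n]"
    by (cases upper) (simp_all add: factor_sturmian_upper_eq_lower)
  also have "\<dots> = mech_word n (frac (\<rho> + real m * \<alpha>))" by (rule factor_sturmian_lower)
  also have "\<dots> = mech_word n p"
    by (rule mech_word_eq_in_gap[OF gap(1,4,5)]) (use m gap(2,3) in auto)
  finally show "v \<in> factors_of_length (sturmian upper \<alpha> \<rho>) n"
    unfolding factors_of_length_def p(2) by (intro CollectI exI[of _ m]) simp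
qed

lemma inj_on_mech_word: "inj_on (mech_word n) (breakpoints n)"
proof (rule inj_onI)
  fix p q assume "p \<in> breakpoints n" "q \<in> breakpoints n" "mech_word n p = mech_word n q"
  then have "p \<le> q" "q \<le> p" using mech_word_eq_iff breakpoints_subset by blast+
  then show "p = q" by simp
qed

lemma card_factors_sturmian:
  "card {v \<in> factors_of_length (sturmian upper \<alpha> \<rho>) n. P v} =
    card {p \<in> breakpoints n. P (mech_word n p)}"
proof -
  have "{v \<in> factors_of_length (sturmian upper \<alpha> \<rho>) n. P v} =
      mech_word n ` {p \<in> breakpoints n. P (mech_word n p)}"
    unfolding factors_sturmian by auto
  moreover have "inj_on (mech_word n) {p \<in> breakpoints n. P (mech_word n p)}"
    by (rule inj_on_subset[OF inj_on_mech_word]) auto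
  ultimately show ?thesis by (simp add: card_image)
qed

lemma abelian_square_mech_word_iff:
  assumes "\<theta> \<in> {0..<1}" "even n" "n > 0"
  shows "abelian_square (mech_word n \<theta>) \<longleftrightarrow>
    (if even \<lfloor>real n * \<alpha>\<rfloor> then \<theta> < frac (- (real n * \<alpha>))
     else frac (- (real n * \<alpha>)) \<le> \<theta>)"
proof -
  define h where "h = n div 2"
  have n: "n = 2 * h" using assms(2) unfolding h_def by simp
  let ?w = "mech_word n \<theta>"
  have "count_list ?w a = count_list (take h ?w) a + count_list (drop h ?w) a"
    by (metis append_take_drop_id count_list_append)
  then have total: "mech_floor \<theta> n = int (count_list (take h ?w) a) + int (count_list (drop h ?w) a)"
    using count_a_mech_word[OF assms(1)] by (metis of_nat_add)
  have first_half: "mech_floor \<theta> h = int (count_list (take h ?w) a)"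
    using take_mech_word count_a_mech_word assms(1) n by simp
  have "abelian_square ?w \<longleftrightarrow> int (count_list (take h ?w) a) = int (count_list (drop h ?w) a)"
    using abelian_square_iff_count_halves[of ?w h] n by simp
  also have "\<dots> \<longleftrightarrow> mech_floor \<theta> n = 2 * mech_floor \<theta> h"
    unfolding total first_half by linarith
  also have "\<dots> \<longleftrightarrow>
      (if even \<lfloor>real n * \<alpha>\<rfloor> then \<theta> < frac (- (real n * \<alpha>))
       else frac (- (real n * \<alpha>)) \<le> \<theta>)"
  proof -
    have double: "real n * \<alpha> = 2 * (real h * \<alpha>)" using n by simp
    have "real n * \<alpha> \<notin> \<int>" using of_nat_mult_irrational_notin_Ints[OF angle_irrational assms(3)] .
    then show ?thesis using floor_add_double_eq_iff[of \<theta> "real h * \<alpha>", folded double] assms(1)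
      unfolding mech_floor_def by simp
  qed
  finally show ?thesis .
qed

lemma breakpoints_eq_insert_I_set: "breakpoints n = insert 0 (I_set n \<alpha>)"
proof -
  have "{..n} = insert 0 {1..n}" by auto
  then show ?thesis unfolding breakpoints_def I_set_def by auto
qed

lemma zero_notin_I_set: "0 \<notin> I_set n \<alpha>"
  using of_nat_mult_irrational_notin_Ints[OF angle_irrational] unfolding I_set_def by auto

theorem ASF_sturmian:
  assumes "n > 0" "even n"
  shows "ASF (sturmian upper \<alpha> \<rho>) n =
    (if even \<lfloor>real n * \<alpha>\<rfloor>
     then card {x \<in> I_set n \<alpha>. x \<le> frac (- (real n * \<alpha>))}
     else card {x \<in> I_set n \<alpha>. x \<ge> frac (- (real n * \<alpha>))})"
proof -
  define t where "t = frac (- (real n * \<alpha>))"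
  define I where "I = I_set n \<alpha>"
  have "t \<in> I" unfolding t_def I_def I_set_def using assms(1) by force
  then have "0 < t" using zero_notin_I_set[of n] unfolding I_def t_def
    by (metis frac_ge_0 order_le_less)
  have "finite I" using finite_breakpoints[of n] unfolding I_def breakpoints_eq_insert_I_set by simp
  have "ASF (sturmian upper \<alpha> \<rho>) n =
      card {p \<in> breakpoints n. if even \<lfloor>real n * \<alpha>\<rfloor> then p < t else t \<le> p}"
    unfolding ASF_def card_factors_sturmian t_def
    using abelian_square_mech_word_iff breakpoints_subset assms by (metis (lifting) subsetD)
  also have "\<dots> =
      (if even \<lfloor>real n * \<alpha>\<rfloor> then card {x \<in> I. x \<le> t} else card {x \<in> I. t \<le> x})"
  proof (cases "even \<lfloor>real n * \<alpha>\<rfloor>")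
    case True
    \<comment> \<open>Trading the breakpoint 0 for the breakpoint t keeps the count.\<close>
    have "{p \<in> breakpoints n. p < t} = insert 0 {x \<in> I. x < t}"
      using \<open>0 < t\<close> unfolding breakpoints_eq_insert_I_set I_def by auto
    moreover have "{x \<in> I. x \<le> t} = insert t {x \<in> I. x < t}" using \<open>t \<in> I\<close> by auto
    ultimately show ?thesis using True \<open>finite I\<close> zero_notin_I_set[of n] unfolding I_def by simp
  next
    case False
    have "{p \<in> breakpoints n. t \<le> p} = {x \<in> I. t \<le> x}"
      using \<open>0 < t\<close> unfolding breakpoints_eq_insert_I_set I_def by auto
    then show ?thesis using False by simp
  qed
  finally show ?thesis unfolding t_def I_def by simp
qed

end

theorem corollary2:
  fixes \<alpha> \<rho> :: real and n :: nat and upper :: bool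
  assumes "0 < \<alpha>" and "\<alpha> < 1" and "\<alpha> \<notin> \<rat>"
    and "0 \<le> \<rho>" and "\<rho> < 1"
    and "n > 0" and "even n"
  shows "ASF (sturmian upper \<alpha> \<rho>) n =
    (if even \<lfloor>real n * \<alpha>\<rfloor>
     then card {x \<in> I_set n \<alpha>. x \<le> frac (- (real n * \<alpha>))}
     else card {x \<in> I_set n \<alpha>. x \<ge> frac (- (real n * \<alpha>))})"
proof -
  interpret irrational_rotation \<alpha> using assms(1-3) by unfold_locales
  show ?thesis using ASF_sturmian assms(6,7) by blast
qed

end
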